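(* Let $\mathcal{C}\subseteq\mathbb{F}_q^n$ be a perfect $t$-error-correcting code with $|\mathcal{C}|\ge 2$, i.e. $\mathcal{C}$ has minimum distance $2t+1$ and $|\mathcal{C}|\cdot\sum_{i=0}^{t}\binom{n}{i}(q-1)^i=q^n$. Then the minimum-distance graph $G(\mathcal{C})$ is connected.
   Context: $d(\cdot,\cdot)$ is Hamming distance. The minimum-distance graph $G(\mathcal{C})$ of a code $\mathcal{C}$ is the graph with vertex set $\mathcal{C}$ in which distinct $c_1,c_2$ are adjacent iff $d(c_1,c_2)=d_{\min}(\mathcal{C})$, the minimum distance of $\mathcal{C}$. *)

theory Defs
  imports Main "HOL-Library.Cardinality"
begin

definition hamming_dist :: "'a list \<Rightarrow> 'a list \<Rightarrow> nat" where
  "hamming_dist x y = card {i. i < length x \<and> x ! i \<noteq> y ! i}"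

definition min_dist :: "'a list set \<Rightarrow> nat" where
  "min_dist C = Min {hamming_dist x y | x y. x \<in> C \<and> y \<in> C \<and> x \<noteq> y}"

definition mdg_adj :: "'a list set \<Rightarrow> 'a list \<Rightarrow> 'a list \<Rightarrow> bool" where
  "mdg_adj C x y \<longleftrightarrow> x \<in> C \<and> y \<in> C \<and> x \<noteq> y \<and> hamming_dist x y = min_dist C"

definition mdg_connected :: "'a list set \<Rightarrow> bool" where
  "mdg_connected C \<longleftrightarrow> (\<forall>x\<in>C. \<forall>y\<in>C. (mdg_adj C)\<^sup>*\<^sup>* x y)"

end

theory Submission
  imports Defs
begin

text \<open>Since the minimum distance is 2t+1, the Hamming balls of radius t around the
codewords are pairwise disjoint; the sphere-packing equality then forces them to cover
every word. Given codewords x and y, change x into y one coordinate at a time. Each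
intermediate word lies in the ball of some codeword, and the codewords of two consecutive
words are at distance at most t + 1 + t = 2t+1. So they coincide or are adjacent in G(C),
and these codewords form a walk from x to y.\<close>

definition hamming_sphere :: "'a list \<Rightarrow> nat \<Rightarrow> 'a list set" where
  "hamming_sphere c i = {w. length w = length c \<and> hamming_dist c w = i}"

definition hamming_ball :: "'a list \<Rightarrow> nat \<Rightarrow> 'a list set" where
  "hamming_ball c r = {w. length w = length c \<and> hamming_dist c w \<le> r}"

lemma hamming_dist_Cons:
  "hamming_dist (a # x) (b # y) = (if a = b then 0 else 1) + hamming_dist x y"
proof -
  have diff: "{i. i < length (a # x) \<and> (a # x) ! i \<noteq> (b # y) ! i} =
      (if a = b then {} else {0}) \<union> Suc ` {i. i < length x \<and> x ! i \<noteq> y ! i}"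
  proof (rule set_eqI)
    fix i
    show "i \<in> {i. i < length (a # x) \<and> (a # x) ! i \<noteq> (b # y) ! i} \<longleftrightarrow>
        i \<in> (if a = b then {} else {0}) \<union> Suc ` {i. i < length x \<and> x ! i \<noteq> y ! i}"
      by (cases i) auto
  qed
  show ?thesis
    unfolding hamming_dist_def diff by (subst card_Un_disjoint) (auto simp: card_image)
qed

lemma hamming_dist_eq_0_iff:
  assumes "length x = length y"
  shows "hamming_dist x y = 0 \<longleftrightarrow> x = y"
proof
  assume "hamming_dist x y = 0"
  then have "{i. i < length x \<and> x ! i \<noteq> y ! i} = {}"
    unfolding hamming_dist_def by simp
  then show "x = y"
    using assms by (intro nth_equalityI) auto
qed (simp add: hamming_dist_def)

lemma hamming_dist_commute:
  assumes "length x = length y"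
  shows "hamming_dist x y = hamming_dist y x"
proof -
  have "{i. i < length x \<and> x ! i \<noteq> y ! i} = {i. i < length y \<and> y ! i \<noteq> x ! i}"
    using assms by auto
  then show ?thesis
    unfolding hamming_dist_def by simp
qed

lemma hamming_dist_triangle:
  assumes "length x = length y" "length y = length z"
  shows "hamming_dist x z \<le> hamming_dist x y + hamming_dist y z"
proof -
  let ?D = "\<lambda>u v. {i. i < length u \<and> u ! i \<noteq> v ! i}"
  have "card (?D x z) \<le> card (?D x y \<union> ?D y z)"
    using assms by (intro card_mono) auto
  also have "\<dots> \<le> card (?D x y) + card (?D y z)"
    by (rule card_Un_le)
  finally show ?thesis
    unfolding hamming_dist_def .
qed

lemma hamming_dist_Suc_step:
  assumes "length x = length w" "hamming_dist x w = Suc k"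
  obtains w' where "length w' = length w" "hamming_dist x w' = k" "hamming_dist w' w \<le> 1"
proof -
  let ?D = "{i. i < length x \<and> x ! i \<noteq> w ! i}"
  have card_D: "card ?D = Suc k"
    using assms(2) unfolding hamming_dist_def .
  then obtain j where j: "j \<in> ?D"
    by (metis card.empty ex_in_conv nat.distinct(1))
  define w' where "w' = w[j := x ! j]"
  have "{i. i < length x \<and> x ! i \<noteq> w' ! i} = ?D - {j}"
    using j assms(1) by (auto simp: w'_def nth_list_update)
  then have "hamming_dist x w' = k"
    using j card_D unfolding hamming_dist_def by simp
  moreover have "{i. i < length w' \<and> w' ! i \<noteq> w ! i} \<subseteq> {j}"
    using nth_list_update_neq by (fastforce simp: w'_def)
  then have "hamming_dist w' w \<le> 1"
    unfolding hamming_dist_def using card_mono[of "{j}"] by fastforce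
  ultimately show ?thesis
    using that[of w'] by (simp add: w'_def)
qed

lemma finite_words_of_length: "finite {w :: 'a::finite list. length w = n}"
  using finite_lists_length_eq[of "UNIV :: 'a set" n] by simp

lemma card_words_of_length: "card {w :: 'a::finite list. length w = n} = CARD('a) ^ n"
  using card_lists_length_eq[of "UNIV :: 'a set" n] by simp

lemma finite_hamming_sphere: "finite (hamming_sphere (c :: 'a::finite list) i)"
  by (rule finite_subset[OF _ finite_words_of_length[of "length c"]])
     (auto simp: hamming_sphere_def)

lemma finite_hamming_ball: "finite (hamming_ball (c :: 'a::finite list) r)"
  by (rule finite_subset[OF _ finite_words_of_length[of "length c"]])
     (auto simp: hamming_ball_def)

lemma hamming_sphere_0: "hamming_sphere c 0 = {c}"
  by (auto simp: hamming_sphere_def hamming_dist_eq_0_iff)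

lemma hamming_sphere_Nil_Suc: "hamming_sphere [] (Suc i) = {}"
  by (simp add: hamming_sphere_def hamming_dist_def)

lemma hamming_sphere_Cons_Suc:
  "hamming_sphere (a # c) (Suc j) =
     (\<lambda>w. a # w) ` hamming_sphere c (Suc j) \<union>
     (\<lambda>(b, w). b # w) ` ((- {a}) \<times> hamming_sphere c j)"
proof (rule set_eqI)
  fix w
  show "w \<in> hamming_sphere (a # c) (Suc j) \<longleftrightarrow> w \<in> (\<lambda>w. a # w) ` hamming_sphere c (Suc j) \<union>
      (\<lambda>(b, w). b # w) ` ((- {a}) \<times> hamming_sphere c j)"
  proof (cases w)
    case (Cons b w')
    then show ?thesis
      by (cases "a = b") (auto simp: hamming_sphere_def hamming_dist_Cons image_iff)
  qed (auto simp: hamming_sphere_def)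
qed

lemma card_hamming_sphere:
  "card (hamming_sphere (c :: 'a::finite list) i) = (length c choose i) * (CARD('a) - 1) ^ i"
proof (induction c arbitrary: i)
  case Nil
  then show ?case
    by (cases i) (simp_all add: hamming_sphere_0 hamming_sphere_Nil_Suc)
next
  case (Cons a c)
  show ?case
  proof (cases i)
    case 0
    then show ?thesis
      by (simp add: hamming_sphere_0)
  next
    case (Suc j)
    let ?same = "(\<lambda>w. a # w) ` hamming_sphere c (Suc j)"
    let ?diff = "(\<lambda>(b, w). b # w) ` ((- {a}) \<times> hamming_sphere c j)"
    have "card (hamming_sphere (a # c) (Suc j)) = card ?same + card ?diff"
      unfolding hamming_sphere_Cons_Suc
      by (rule card_Un_disjoint) (auto simp: finite_hamming_sphere)
    also have "card ?same = card (hamming_sphere c (Suc j))"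
      by (rule card_image) simp
    also have "card ?diff = (CARD('a) - 1) * card (hamming_sphere c j)"
      by (subst card_image)
         (auto simp: inj_on_def card_cartesian_product Compl_eq_Diff_UNIV card_Diff_singleton)
    also have "card (hamming_sphere c (Suc j)) + (CARD('a) - 1) * card (hamming_sphere c j) =
        (length (a # c) choose Suc j) * (CARD('a) - 1) ^ Suc j"
      by (simp add: Cons.IH algebra_simps)
    finally show ?thesis
      using Suc by simp
  qed
qed

lemma card_hamming_ball:
  "card (hamming_ball (c :: 'a::finite list) r) = (\<Sum>i\<le>r. (length c choose i) * (CARD('a) - 1) ^ i)"
proof -
  have "hamming_ball c r = (\<Union>i\<le>r. hamming_sphere c i)"
    by (auto simp: hamming_ball_def hamming_sphere_def)
  moreover have "hamming_sphere c i \<inter> hamming_sphere c j = {}" if "i \<noteq> j" for i j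
    using that by (auto simp: hamming_sphere_def)
  ultimately have "card (hamming_ball c r) = (\<Sum>i\<le>r. card (hamming_sphere c i))"
    by (simp add: card_UN_disjoint finite_hamming_sphere)
  then show ?thesis
    by (simp add: card_hamming_sphere)
qed

lemma min_dist_le_hamming_dist:
  assumes "finite C" "x \<in> C" "y \<in> C" "x \<noteq> y"
  shows "min_dist C \<le> hamming_dist x y"
proof -
  have "{hamming_dist x y | x y. x \<in> C \<and> y \<in> C \<and> x \<noteq> y} \<subseteq> case_prod hamming_dist ` (C \<times> C)"
    by auto
  moreover have "finite (case_prod hamming_dist ` (C \<times> C))"
    using assms(1) by simp
  ultimately have "finite {hamming_dist x y | x y. x \<in> C \<and> y \<in> C \<and> x \<noteq> y}"
    by (rule finite_subset)
  then show ?thesis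
    unfolding min_dist_def by (rule Min_le) (use assms in auto)
qed

lemma eq_if_hamming_dist_less_min_dist:
  assumes "finite C" "x \<in> C" "y \<in> C" "hamming_dist x y < min_dist C"
  shows "x = y"
  using min_dist_le_hamming_dist[OF assms(1-3)] assms(4) by fastforce

lemma mdg_adj_if_hamming_dist_le:
  assumes "finite C" "x \<in> C" "y \<in> C" "x \<noteq> y" "hamming_dist x y \<le> min_dist C"
  shows "mdg_adj C x y"
  using min_dist_le_hamming_dist[OF assms(1-4)] assms unfolding mdg_adj_def by simp

lemma hamming_balls_disjoint:
  assumes "C \<subseteq> {x. length x = n}" "finite C" "2 * r + 1 \<le> min_dist C"
    and "c \<in> C" "c' \<in> C" "c \<noteq> c'"
  shows "hamming_ball c r \<inter> hamming_ball c' r = {}"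
proof (rule ccontr)
  assume "hamming_ball c r \<inter> hamming_ball c' r \<noteq> {}"
  then obtain w where w: "w \<in> hamming_ball c r" "w \<in> hamming_ball c' r"
    by blast
  have lengths: "length c = n" "length c' = n" "length w = n"
    using assms(1,4,5) w by (auto simp: hamming_ball_def)
  have "hamming_dist c c' \<le> hamming_dist c w + hamming_dist w c'"
    using lengths by (intro hamming_dist_triangle) simp_all
  also have "hamming_dist w c' = hamming_dist c' w"
    using lengths by (intro hamming_dist_commute) simp
  finally have "hamming_dist c c' < min_dist C"
    using w assms(3) by (simp add: hamming_ball_def)
  then show False
    using eq_if_hamming_dist_less_min_dist[OF assms(2,4,5)] assms(6) by blast
qed

lemma perfect_code_covers:
  fixes C :: "'a::finite list set"
  assumes "C \<subseteq> {x. length x = n}" "2 * r + 1 \<le> min_dist C"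
    and "card C * (\<Sum>i\<le>r. (n choose i) * (CARD('a) - 1) ^ i) = CARD('a) ^ n"
    and "length w = n"
  shows "\<exists>c\<in>C. hamming_dist c w \<le> r"
proof -
  let ?W = "{x :: 'a list. length x = n}"
  have fin_C: "finite C"
    using assms(1) finite_words_of_length by (rule finite_subset)
  have balls_W: "(\<Union>c\<in>C. hamming_ball c r) \<subseteq> ?W"
    using assms(1) by (auto simp: hamming_ball_def)
  have "card (\<Union>c\<in>C. hamming_ball c r) = (\<Sum>c\<in>C. card (hamming_ball c r))"
    using fin_C hamming_balls_disjoint[OF assms(1) fin_C assms(2)]
    by (intro card_UN_disjoint) (auto simp: finite_hamming_ball)
  also have "\<dots> = card ?W"
    using assms(1,3) by (simp add: card_hamming_ball subset_eq card_words_of_length)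
  finally have "(\<Union>c\<in>C. hamming_ball c r) = ?W"
    by (rule card_subset_eq[OF finite_words_of_length balls_W])
  then show ?thesis
    using assms(1,4) by (auto simp: hamming_ball_def)
qed

lemma covering_code_mdg_reachable:
  assumes "C \<subseteq> {x. length x = n}" "finite C" "2 * r + 1 \<le> min_dist C"
    and covers: "\<And>w. length w = n \<Longrightarrow> \<exists>c\<in>C. hamming_dist c w \<le> r"
    and "x \<in> C" "length w = n" "c \<in> C" "hamming_dist c w \<le> r"
  shows "(mdg_adj C)\<^sup>*\<^sup>* x c"
  using assms(6-8)
proof (induction "hamming_dist x w" arbitrary: w c)
  case 0
  have len: "length x = n" "length c = n"
    using assms(1,5) \<open>c \<in> C\<close> by auto
  then have "w = x"
    using 0 hamming_dist_eq_0_iff[of x w] by simp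
  then have "c = x"
    using eq_if_hamming_dist_less_min_dist[OF assms(2) \<open>c \<in> C\<close> assms(5)] 0 assms(3) by simp
  then show ?case
    by simp
next
  case (Suc k)
  have len: "length x = n" "length c = n"
    using assms(1,5) \<open>c \<in> C\<close> by auto
  obtain w' where w': "length w' = n" "hamming_dist x w' = k" "hamming_dist w' w \<le> 1"
    using hamming_dist_Suc_step[of x w k] len Suc by auto
  obtain c' where c': "c' \<in> C" "hamming_dist c' w' \<le> r"
    using covers[OF w'(1)] by blast
  have "length c' = n"
    using assms(1) c'(1) by auto
  then have "hamming_dist c' c \<le> hamming_dist c' w' + hamming_dist w' w + hamming_dist w c"
    using hamming_dist_triangle[of c' w' c] hamming_dist_triangle[of w' w c] w'(1) len Suc
    by simp
  also have "hamming_dist w c = hamming_dist c w"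
    using hamming_dist_commute[of w c] len Suc by simp
  finally have "hamming_dist c' c \<le> min_dist C"
    using c'(2) w'(3) Suc assms(3) by simp
  then have "c' = c \<or> mdg_adj C c' c"
    using mdg_adj_if_hamming_dist_le[OF assms(2) c'(1) \<open>c \<in> C\<close>] by blast
  moreover have "(mdg_adj C)\<^sup>*\<^sup>* x c'"
    using Suc.hyps(1) w' c' by blast
  ultimately show ?case
    by (auto intro: rtranclp.rtrancl_into_rtrancl)
qed

lemma covering_code_mdg_connected:
  assumes "C \<subseteq> {x. length x = n}" "finite C" "2 * r + 1 \<le> min_dist C"
    and covers: "\<And>w. length w = n \<Longrightarrow> \<exists>c\<in>C. hamming_dist c w \<le> r"
  shows "mdg_connected C"
  unfolding mdg_connected_def
proof (intro ballI)
  fix x y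
  assume "x \<in> C" "y \<in> C"
  moreover have "hamming_dist y y = 0"
    by (simp add: hamming_dist_def)
  ultimately show "(mdg_adj C)\<^sup>*\<^sup>* x y"
    using covering_code_mdg_reachable[OF assms, of x y y] assms(1) by auto
qed

theorem theorem8:
  fixes C :: "('a::{finite,field}) list set" and n t :: nat
  assumes "C \<subseteq> {x. length x = n}"
    and "card C \<ge> 2"
    and "min_dist C = 2 * t + 1"
    and "card C * (\<Sum>i\<le>t. (n choose i) * (CARD('a) - 1) ^ i) = CARD('a) ^ n"
  shows "mdg_connected C"
proof -
  have "finite C"
    using assms(1) finite_words_of_length by (rule finite_subset)
  moreover have "\<exists>c\<in>C. hamming_dist c w \<le> t" if "length w = n" for w
    using perfect_code_covers[of C n t w] assms(1,3,4) that by simp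
  ultimately show ?thesis
    using covering_code_mdg_connected[of C n t] assms(1,3) by simp
qed

end
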